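(* There is an absolute constant $C > 0$ such that for every $L \geq 1$, $m \geq 1$, $k^* \in [m]$, $i \in \{0,\ldots,L\}$, $k\in[m]$ and $\lambda \in [m]^{L+1}$, the length (number of elementary steps) of the path $\gamma_{\lambda,\lambda_{[i,k]}}$ satisfies $|\gamma_{\lambda,\lambda_{[i,k]}}| \leq C L^{\log_2 3}$.
   Context: States are $\lambda = (\lambda_0,\ldots,\lambda_L) \in [m]^{L+1}$; coordinate $\ell$ is level $\ell$. $\lambda_{[i,k]}$ is $\lambda$ with the level-$i$ entry replaced by $k$. The procedure $\mathbf{Swap}(a,b)$ ($0\le a\le b\le L$): if $b - a \leq 1$, perform the single elementary operation exchanging the entries at levels $a$ and $b$; otherwise with $h = \lfloor (a+b)/2 \rfloor$ perform $\mathbf{Swap}(a,h)$, then $\mathbf{Swap}(h,b)$, then $\mathbf{Swap}(a,h)$. The path $\gamma_{\lambda,\lambda_{[i,k]}}$ (with $k^*$ a fixed element of $[m]$) starts at $\lambda$ and performs in order the elementary or recursive operations: (1) set the level-0 entry to $k^*$; (2) $\mathbf{Swap}(0,i)$; (3) set the level-0 entry to $k$; (4) $\mathbf{Swap}(0,i)$; (5) set the level-0 entry to $\lambda_0$. Its length $|\gamma_{\lambda,\lambda_{[i,k]}}|$ is the total number of elementary operations performed. *)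

theory Defs
  imports Complex_Main
begin

text \<open>States are lists of length L+1 with entries in {1..m}; entry at index l is level l.\<close>

datatype elem_op = SetLevel0 nat | Exch nat nat

fun apply_op :: "elem_op \<Rightarrow> nat list \<Rightarrow> nat list" where
  "apply_op (SetLevel0 v) s = s[0 := v]"
| "apply_op (Exch a b) s = (s[a := s ! b])[b := s ! a]"

text \<open>The recursive procedure Swap(a,b), as the list of elementary operations it performs.\<close>
function swap_ops :: "nat \<Rightarrow> nat \<Rightarrow> elem_op list" where
  "swap_ops a b = (if b - a \<le> 1 then [Exch a b]
     else (let h = (a + b) div 2 in swap_ops a h @ swap_ops h b @ swap_ops a h))"
  by pat_completeness auto
termination
  by (relation "measure (\<lambda>(a, b). b - a)") auto

definition gamma_ops :: "nat list \<Rightarrow> nat \<Rightarrow> nat \<Rightarrow> nat \<Rightarrow> elem_op list" where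
  "gamma_ops lam i k kstar =
     [SetLevel0 kstar] @ swap_ops 0 i @ [SetLevel0 k] @ swap_ops 0 i @ [SetLevel0 (lam ! 0)]"

definition gamma_states :: "nat list \<Rightarrow> nat \<Rightarrow> nat \<Rightarrow> nat \<Rightarrow> nat list list" where
  "gamma_states lam i k kstar = rev (fold (\<lambda>op ss. apply_op op (hd ss) # ss) (gamma_ops lam i k kstar) [lam])"

definition gamma_length :: "nat list \<Rightarrow> nat \<Rightarrow> nat \<Rightarrow> nat \<Rightarrow> nat" where
  "gamma_length lam i k kstar = length (gamma_ops lam i k kstar)"

end

theory Submission
  imports Defs
begin

text \<open>Swap on an interval of length at most 2^(k+1) recurses three times on intervals of length
  at most 2^k, so on an interval of length at most 2^k it performs at most 3^k elementary operations.
  Choosing L \<le> 2^k \<le> 2L gives 3^k = (2^k) powr log 2 3 \<le> (2L) powr log 2 3 = 3 L powr log 2 3,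
  and the path consists of two Swaps and three updates of level 0.\<close>

declare swap_ops.simps[simp del]

lemma swap_ops_split:
  assumes "\<not> b - a \<le> 1"
  shows "swap_ops a b = swap_ops a ((a + b) div 2) @ swap_ops ((a + b) div 2) b @ swap_ops a ((a + b) div 2)"
  using assms by (subst swap_ops.simps) (simp add: Let_def)

lemma length_swap_ops_le_pow3:
  "b - a \<le> 2 ^ k \<Longrightarrow> length (swap_ops a b) \<le> 3 ^ k"
proof (induction k arbitrary: a b)
  case 0
  then show ?case by (subst swap_ops.simps) simp
next
  case (Suc k)
  show ?case
  proof (cases "b - a \<le> 1")
    case True
    then show ?thesis by (subst swap_ops.simps) simp
  next
    case False
    let ?h = "(a + b) div 2"
    have "?h - a \<le> 2 ^ k" "b - ?h \<le> 2 ^ k"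
      using Suc.prems by auto
    then have "length (swap_ops a ?h) \<le> 3 ^ k" "length (swap_ops ?h b) \<le> 3 ^ k"
      using Suc.IH by auto
    then show ?thesis
      using swap_ops_split[OF False] by simp
  qed
qed

lemma gamma_length_eq: "gamma_length lam i k kstar = 3 + 2 * length (swap_ops 0 i)"
  by (simp add: gamma_length_def gamma_ops_def)

lemma power_of_two_cover:
  assumes "(n::nat) \<ge> 1"
  obtains k where "n \<le> 2 ^ k" "2 ^ k \<le> 2 * n"
proof -
  obtain j where "2 ^ j \<le> n" "n < 2 ^ (j + 1)"
    using ex_power_ivl1[of 2 n] assms by auto
  then show ?thesis
    by (intro that[of "j + 1"]) auto
qed

lemma power_powr_log:
  fixes b c :: real
  assumes "0 < b" "b \<noteq> 1" "0 < c"
  shows "(b ^ k) powr log b c = c ^ k"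
proof -
  have "(b ^ k) powr log b c = (b powr real k) powr log b c"
    using assms by (simp add: powr_realpow)
  also have "\<dots> = (b powr log b c) powr real k"
    by (simp add: powr_powr mult.commute)
  also have "\<dots> = c ^ k"
    using assms by (simp add: powr_realpow)
  finally show ?thesis .
qed

lemma pow3_le_powr_log2_3:
  assumes "2 ^ k \<le> 2 * n"
  shows "real (3 ^ k) \<le> 3 * real n powr log 2 3"
proof -
  have "real (3 ^ k) = real (2 ^ k) powr log 2 3"
    using power_powr_log[of 2 3 k] by simp
  also have "\<dots> \<le> (2 * real n) powr log 2 3"
  proof (rule powr_mono2)
    show "real (2 ^ k) \<le> 2 * real n"
      using assms by (metis of_nat_le_iff of_nat_mult of_nat_numeral)
  qed simp_all
  also have "\<dots> = 3 * real n powr log 2 3"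
    by (simp add: powr_mult)
  finally show ?thesis .
qed

theorem lemma5:
  "\<exists>C::real. C > 0 \<and>
     (\<forall>L m kstar i k lam.
        L \<ge> 1 \<longrightarrow> m \<ge> 1 \<longrightarrow> kstar \<in> {1..m} \<longrightarrow> i \<le> L \<longrightarrow> k \<in> {1..m} \<longrightarrow>
        length lam = Suc L \<longrightarrow> set lam \<subseteq> {1..m} \<longrightarrow>
        real (gamma_length lam i k kstar) \<le> C * real L powr log 2 3)"
proof (intro exI[of _ 9] conjI allI impI)
  fix L m kstar i k :: nat and lam :: "nat list"
  assume L: "L \<ge> 1" and iL: "i \<le> L"
  obtain j where j: "L \<le> 2 ^ j" "2 ^ j \<le> 2 * L"
    using power_of_two_cover[OF L] .
  have "length (swap_ops 0 i) \<le> 3 ^ j"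
    using j iL by (intro length_swap_ops_le_pow3) simp
  then have "real (gamma_length lam i k kstar) \<le> 3 + 2 * real (3 ^ j)"
    unfolding gamma_length_eq by simp
  moreover have "real (3 ^ j) \<le> 3 * real L powr log 2 3"
    using j by (intro pow3_le_powr_log2_3) simp
  moreover have "1 \<le> real L powr log 2 3"
    using L by (intro ge_one_powr_ge_zero) auto
  ultimately show "real (gamma_length lam i k kstar) \<le> 9 * real L powr log 2 3"
    by linarith
qed simp

end
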